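(* Let $(E,\mathcal{E},m)$ be a $\sigma$-finite measure space and let $P$ be a stochastic operator on $L^1(E,\mathcal{E},m)$ which is uniquely mean ergodic with invariant density $f_*$. If a nonnegative measurable function $\tilde f_*$ is subinvariant for $P$ and $m(\operatorname{supp} f_*\cap\{x:\tilde f_*(x)<\infty\})>0$, then $\tilde f_*\in L^1$.
   Context: $L^1_+$ denotes the nonnegative elements of $L^1$, and $D(m)=\{f\in L^1_+:\|f\|=1\}$ is the set of densities. A linear operator $P$ on $L^1$ is stochastic if $P(D(m))\subseteq D(m)$. A substochastic (positive contraction) operator $P$ is extended to nonnegative measurable functions by $Pf=\sup_n Pf_n$ whenever $f=\sup_n f_n$ with $0\le f_n\le f_{n+1}$, $f_n\in L^1_+$ (the value may be $+\infty$). A nonnegative measurable $f$ is subinvariant for $P$ if $Pf\le f$. $P$ is uniquely mean ergodic if there is an invariant density $f_*$ ($Pf_*=f_*$) with $\lim_{N\to\infty}\frac1N\sum_{n=0}^{N-1}P^nf=f_*\|f\|$ for all $f\in L^1_+$. The support of $f$ is $\operatorname{supp} f=\{x: f(x)\neq0\}$ (up to null sets). *)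

theory Defs
  imports "HOL-Analysis.Analysis"
begin

text \<open>Elements of L^1 are represented by integrable real functions (modulo a.e. equality);
  an operator on L^1 is a map on real functions that respects a.e. equality.\<close>

definition L1_plus :: "'a measure \<Rightarrow> ('a \<Rightarrow> real) \<Rightarrow> bool" where
  "L1_plus M f \<longleftrightarrow> integrable M f \<and> (AE x in M. 0 \<le> f x)"

definition density_on :: "'a measure \<Rightarrow> ('a \<Rightarrow> real) \<Rightarrow> bool" where
  "density_on M f \<longleftrightarrow> L1_plus M f \<and> integral\<^sup>L M f = 1"

definition stochastic_op :: "'a measure \<Rightarrow> (('a \<Rightarrow> real) \<Rightarrow> ('a \<Rightarrow> real)) \<Rightarrow> bool" where
  "stochastic_op M P \<longleftrightarrow>
     (\<forall>f. integrable M f \<longrightarrow> integrable M (P f)) \<and>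
     (\<forall>f g. integrable M f \<and> integrable M g \<and> (AE x in M. f x = g x)
            \<longrightarrow> (AE x in M. P f x = P g x)) \<and>
     (\<forall>f g (a::real) (b::real). integrable M f \<and> integrable M g
            \<longrightarrow> (AE x in M. P (\<lambda>y. a * f y + b * g y) x = a * P f x + b * P g x)) \<and>
     (\<forall>f. density_on M f \<longrightarrow> density_on M (P f))"

definition uniquely_mean_ergodic ::
  "'a measure \<Rightarrow> (('a \<Rightarrow> real) \<Rightarrow> ('a \<Rightarrow> real)) \<Rightarrow> ('a \<Rightarrow> real) \<Rightarrow> bool" where
  "uniquely_mean_ergodic M P fstar \<longleftrightarrow>
     density_on M fstar \<and> (AE x in M. P fstar x = fstar x) \<and>
     (\<forall>f. L1_plus M f \<longrightarrow>
        ((\<lambda>N::nat. \<integral>x. \<bar>(1 / real N) * (\<Sum>n<N. (P ^^ n) f x) - fstar x * integral\<^sup>L M f\<bar> \<partial>M)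
          \<longlonglongrightarrow> 0))"

text \<open>Subinvariance of a nonnegative measurable (extended-valued) function, using the
  monotone extension Pf = sup_n P f_n for f = sup_n f_n, 0 \<le> f_n \<le> f_(n+1), f_n in L^1_+.\<close>
definition subinvariant ::
  "'a measure \<Rightarrow> (('a \<Rightarrow> real) \<Rightarrow> ('a \<Rightarrow> real)) \<Rightarrow> ('a \<Rightarrow> ennreal) \<Rightarrow> bool" where
  "subinvariant M P ft \<longleftrightarrow>
     (\<forall>fn :: nat \<Rightarrow> 'a \<Rightarrow> real.
        (\<forall>n. L1_plus M (fn n)) \<and> (AE x in M. incseq (\<lambda>n. fn n x)) \<and>
        (AE x in M. ft x = (SUP n. ennreal (fn n x)))
        \<longrightarrow> (AE x in M. (SUP n. ennreal (P (fn n) x)) \<le> ft x))"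

end

theory Submission imports Defs begin

text \<open>Approximate \<open>ft\<close> from below by an increasing sequence \<open>f\<^sub>n\<close> in \<open>L\<^sup>1\<^sub>+\<close>; this is possible
  because \<open>M\<close> is \<sigma>-finite. Subinvariance gives \<open>P\<^sup>k f\<^sub>n \<le> ft\<close> for all \<open>k\<close>, hence the Cesaro
  means of \<open>f\<^sub>n\<close> are bounded by \<open>ft\<close>, and in the limit \<open>f\<^sub>* \<cdot> \<parallel>f\<^sub>n\<parallel> \<le> ft\<close> almost everywhere.
  Evaluated at a single point where \<open>0 < f\<^sub>*\<close> and \<open>ft < \<infinity>\<close>, this bounds \<open>\<parallel>f\<^sub>n\<parallel>\<close> uniformly
  in \<open>n\<close>, and monotone convergence bounds \<open>\<integral> ft\<close>.\<close>

lemma stochastic_op_zero: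
  assumes "stochastic_op M P"
  shows "AE x in M. P (\<lambda>_. 0) x = 0"
proof -
  have "AE x in M. P (\<lambda>y. 0 * (0::real) + 0 * 0) x = 0 * P (\<lambda>_. 0) x + 0 * P (\<lambda>_. 0) x"
    using assms unfolding stochastic_op_def by blast
  then show ?thesis by simp
qed

lemma stochastic_op_diff:
  assumes "stochastic_op M P" "integrable M f" "integrable M g"
  shows "AE x in M. P (\<lambda>y. g y - f y) x = P g x - P f x"
proof -
  have "AE x in M. P (\<lambda>y. 1 * g y + (-1) * f y) x = 1 * P g x + (-1) * P f x"
    using assms unfolding stochastic_op_def by blast
  then show ?thesis by simp
qed

lemma stochastic_op_nonneg:
  assumes P: "stochastic_op M P" and f: "L1_plus M f"
  shows "AE x in M. 0 \<le> P f x"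
proof -
  have int: "integrable M f" and nn: "AE x in M. 0 \<le> f x"
    using f unfolding L1_plus_def by auto
  define c where "c = integral\<^sup>L M f"
  have "c \<ge> 0" unfolding c_def using integral_nonneg_AE[OF nn] .
  then consider "c = 0" | "c > 0" by linarith
  then show ?thesis
  proof cases
    case 1
    then have "AE x in M. f x = 0"
      using integral_nonneg_eq_0_iff_AE[OF int] nn by (auto simp: c_def)
    then have "AE x in M. P f x = P (\<lambda>_. 0) x"
      using P int unfolding stochastic_op_def by auto
    then show ?thesis using stochastic_op_zero[OF P] by eventually_elim simp
  next
    case 2
    \<comment> \<open>\<open>P\<close> is only assumed to preserve densities, so rescale \<open>f\<close> to one.\<close>
    have "density_on M (\<lambda>y. (1/c) * f y + 0 * f y)"
      unfolding density_on_def L1_plus_def using int nn 2 by (auto simp: c_def)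
    then have "AE x in M. 0 \<le> P (\<lambda>y. (1/c) * f y + 0 * f y) x"
      using P unfolding stochastic_op_def density_on_def L1_plus_def by blast
    moreover have "AE x in M. P (\<lambda>y. (1/c) * f y + 0 * f y) x = (1/c) * P f x + 0 * P f x"
      using P int unfolding stochastic_op_def by blast
    ultimately show ?thesis by eventually_elim (use 2 in \<open>simp add: zero_le_divide_iff\<close>)
  qed
qed

lemma stochastic_op_mono:
  assumes "stochastic_op M P" "integrable M f" "integrable M g" "AE x in M. f x \<le> g x"
  shows "AE x in M. P f x \<le> P g x"
proof -
  have "L1_plus M (\<lambda>y. g y - f y)" unfolding L1_plus_def using assms by auto
  from stochastic_op_nonneg[OF assms(1) this] stochastic_op_diff[OF assms(1-3)]
  show ?thesis by eventually_elim simp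
qed

lemma stochastic_op_funpow_integrable:
  assumes "stochastic_op M P" "integrable M f"
  shows "integrable M ((P ^^ k) f)"
  using assms by (induction k) (auto simp: stochastic_op_def)

lemma stochastic_op_funpow_mono:
  assumes P: "stochastic_op M P" and "integrable M f" "integrable M g" "AE x in M. f x \<le> g x"
  shows "AE x in M. (P ^^ k) f x \<le> (P ^^ k) g x"
proof (induction k)
  case 0
  then show ?case using assms by simp
next
  case (Suc k)
  then show ?case
    using stochastic_op_mono[OF P stochastic_op_funpow_integrable[OF P] stochastic_op_funpow_integrable[OF P]]
      assms by simp
qed

definition approximating_seq ::
  "'a measure \<Rightarrow> ('a \<Rightarrow> ennreal) \<Rightarrow> (nat \<Rightarrow> 'a \<Rightarrow> real) \<Rightarrow> bool" where
  "approximating_seq M ft fn \<longleftrightarrow> (\<forall>n. L1_plus M (fn n)) \<and> (AE x in M. incseq (\<lambda>n. fn n x)) \<and>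
     (AE x in M. ft x = (SUP n. ennreal (fn n x)))"

lemma subinvariant_iff_approximating_seq:
  "subinvariant M P ft \<longleftrightarrow>
     (\<forall>fn. approximating_seq M ft fn \<longrightarrow> (AE x in M. (SUP n. ennreal (P (fn n) x)) \<le> ft x))"
  unfolding subinvariant_def approximating_seq_def by blast

lemma approximating_seq_le:
  assumes "approximating_seq M ft fn"
  shows "AE x in M. \<forall>n. ennreal (fn n x) \<le> ft x"
proof -
  have "AE x in M. ft x = (SUP n. ennreal (fn n x))"
    using assms unfolding approximating_seq_def by auto
  then show ?thesis by eventually_elim (metis SUP_upper UNIV_I)
qed

lemma approximating_seq_max:
  assumes fn: "approximating_seq M ft fn"
    and g: "\<And>n. L1_plus M (g n)" "AE x in M. incseq (\<lambda>n. g n x)"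
    and g_le: "AE x in M. \<forall>n. ennreal (g n x) \<le> ft x"
  shows "approximating_seq M ft (\<lambda>n x. max (g n x) (fn n x))"
proof -
  have L: "\<And>n. L1_plus M (fn n)" and inc: "AE x in M. incseq (\<lambda>n. fn n x)"
    and sup: "AE x in M. ft x = (SUP n. ennreal (fn n x))"
    using fn unfolding approximating_seq_def by auto
  have "L1_plus M (\<lambda>x. max (g n x) (fn n x))" for n
    using L[of n] g(1)[of n] unfolding L1_plus_def
    by (auto intro!: integrable_max elim: eventually_mono)
  moreover have "AE x in M. incseq (\<lambda>n. max (g n x) (fn n x))"
    using g(2) inc unfolding incseq_def by eventually_elim (blast intro: max.mono)
  moreover have "AE x in M. ft x = (SUP n. ennreal (max (g n x) (fn n x)))"
    using sup g_le approximating_seq_le[OF fn]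
  proof eventually_elim
    case (elim x)
    have "(SUP n. ennreal (max (g n x) (fn n x))) \<le> ft x"
      using elim(2,3) by (intro SUP_least) (simp add: max_def)
    moreover have "ft x \<le> (SUP n. ennreal (max (g n x) (fn n x)))"
      unfolding elim(1) by (intro SUP_mono) (meson ennreal_leI max.cobounded2)
    ultimately show ?case by simp
  qed
  ultimately show ?thesis unfolding approximating_seq_def by blast
qed

lemma subinvariant_funpow_le:
  assumes P: "stochastic_op M P" and sub: "subinvariant M P ft"
    and fn: "approximating_seq M ft fn"
  shows "AE x in M. \<forall>n. ennreal ((P ^^ k) (fn n) x) \<le> ft x"
  using fn
proof (induction k arbitrary: fn)
  case 0
  then show ?case using approximating_seq_le by simp
next
  case (Suc k)
  have L: "\<And>n. L1_plus M (fn n)" and inc: "AE x in M. incseq (\<lambda>n. fn n x)"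
    using Suc.prems unfolding approximating_seq_def by auto
  have int: "\<And>n. integrable M (fn n)" using L unfolding L1_plus_def by auto
  have intP: "\<And>n. integrable M (P (fn n))" using P int unfolding stochastic_op_def by auto
  have "AE x in M. (SUP n. ennreal (P (fn n) x)) \<le> ft x"
    using sub Suc.prems unfolding subinvariant_iff_approximating_seq by blast
  then have P_le: "AE x in M. \<forall>n. ennreal (P (fn n) x) \<le> ft x"
    by eventually_elim (metis SUP_upper UNIV_I order_trans)
  have "\<And>n. AE x in M. fn n x \<le> fn (Suc n) x"
    using inc by (auto elim!: eventually_mono simp: incseq_Suc_iff)
  then have "AE x in M. \<forall>n. P (fn n) x \<le> P (fn (Suc n)) x"
    using stochastic_op_mono[OF P int int] by (simp add: AE_all_countable)
  then have P_inc: "AE x in M. incseq (\<lambda>n. P (fn n) x)"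
    by eventually_elim (simp add: incseq_Suc_iff)
  define gn where "gn = (\<lambda>n x. max (P (fn n) x) (fn n x))"
  \<comment> \<open>\<open>P f\<^sub>n\<close> need not increase to \<open>ft\<close>; the maximum with \<open>f\<^sub>n\<close> restores the supremum.\<close>
  have gn: "approximating_seq M ft gn"
    unfolding gn_def
    using approximating_seq_max[OF Suc.prems _ P_inc P_le] stochastic_op_nonneg[OF P L] intP
    by (simp add: L1_plus_def)
  have "integrable M (gn n)" for n
    using gn unfolding approximating_seq_def L1_plus_def by auto
  then have "AE x in M. \<forall>n. (P ^^ k) (P (fn n)) x \<le> (P ^^ k) (gn n) x"
    using stochastic_op_funpow_mono[OF P intP] by (simp add: AE_all_countable gn_def)
  with Suc.IH[OF gn] show ?case
    by eventually_elim (metis ennreal_leI funpow_Suc_right o_apply order_trans)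
qed

lemma sigma_finite_approximating_seq:
  assumes "sigma_finite_measure M" and ft[measurable]: "ft \<in> borel_measurable M"
  obtains fn where "approximating_seq M ft fn"
proof -
  obtain h where h[measurable]: "h \<in> borel_measurable M" and h_int: "integral\<^sup>N M h \<noteq> \<infinity>"
    and h_pos: "\<And>x. x \<in> space M \<Longrightarrow> 0 < h x \<and> h x < \<infinity>"
    using sigma_finite_measure.Ex_finite_integrable_function[OF assms(1)] by blast
  define fn where "fn = (\<lambda>(n::nat) x. enn2real (min (ft x) (of_nat n * h x)))"
  have fin: "min (ft x) (of_nat n * h x) < top" if "x \<in> space M" for n x
    using h_pos[OF that] by (simp add: min_less_iff_disj ennreal_mult_less_top of_nat_less_top)
  have fn_eq: "ennreal (fn n x) = min (ft x) (of_nat n * h x)" if "x \<in> space M" for n x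
    unfolding fn_def using fin[OF that] by (simp add: ennreal_enn2real)
  have "L1_plus M (fn n)" for n
  proof -
    have "(\<integral>\<^sup>+x. ennreal (fn n x) \<partial>M) = (\<integral>\<^sup>+x. min (ft x) (of_nat n * h x) \<partial>M)"
      by (rule nn_integral_cong) (simp add: fn_eq)
    also have "\<dots> \<le> (\<integral>\<^sup>+x. of_nat n * h x \<partial>M)" by (intro nn_integral_mono) simp
    also have "\<dots> = of_nat n * integral\<^sup>N M h" by (simp add: nn_integral_cmult)
    also have "\<dots> < \<infinity>" using h_int by (simp add: ennreal_mult_less_top less_top of_nat_less_top)
    finally show ?thesis unfolding L1_plus_def
      by (auto intro!: integrableI_nonneg simp: fn_def)
  qed
  moreover have "AE x in M. incseq (\<lambda>n. fn n x)"
  proof (rule AE_I2, rule incseq_SucI)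
    fix x n assume x: "x \<in> space M"
    have "min (ft x) (of_nat n * h x) \<le> min (ft x) (of_nat (Suc n) * h x)"
      by (intro min.mono order.refl mult_right_mono) auto
    then show "fn n x \<le> fn (Suc n) x"
      unfolding fn_def using fin[OF x, of "Suc n"] by (intro enn2real_mono) auto
  qed
  moreover have "AE x in M. ft x = (SUP n. ennreal (fn n x))"
  proof (rule AE_I2)
    fix x assume x: "x \<in> space M"
    have "(SUP n. of_nat n * h x) = (SUP n. of_nat n :: ennreal) * h x"
      by (simp add: SUP_mult_right_ennreal)
    also have "\<dots> = top"
      using h_pos[OF x] by (auto simp: ennreal_SUP_of_nat_eq_top ennreal_top_mult)
    finally have unbounded: "(SUP n. of_nat n * h x) = top" .
    have "(SUP n. ennreal (fn n x)) = (SUP n. inf (ft x) (of_nat n * h x))"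
      using fn_eq[OF x] by (simp add: inf_min)
    also have "\<dots> = inf (ft x) (SUP n. of_nat n * h x)" by (simp add: inf_SUP)
    finally have "(SUP n. ennreal (fn n x)) = inf (ft x) (SUP n. of_nat n * h x)" .
    then show "ft x = (SUP n. ennreal (fn n x))" unfolding unbounded by simp
  qed
  ultimately show ?thesis using that unfolding approximating_seq_def by blast
qed

lemma nn_integral_approximating_seq:
  assumes "approximating_seq M ft fn"
  shows "(\<integral>\<^sup>+ x. ft x \<partial>M) = (SUP n. ennreal (integral\<^sup>L M (fn n)))"
proof -
  have int: "\<And>n. integrable M (fn n)" and nn: "\<And>n. AE x in M. 0 \<le> fn n x"
    and inc: "AE x in M. incseq (\<lambda>n. fn n x)"
    and sup: "AE x in M. ft x = (SUP n. ennreal (fn n x))"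
    using assms unfolding approximating_seq_def L1_plus_def by auto
  have "(\<integral>\<^sup>+ x. ft x \<partial>M) = (\<integral>\<^sup>+ x. (SUP n. ennreal (fn n x)) \<partial>M)"
    using sup by (rule nn_integral_cong_AE)
  also have "\<dots> = (SUP n. \<integral>\<^sup>+ x. ennreal (fn n x) \<partial>M)"
  proof (rule nn_integral_monotone_convergence_SUP_AE)
    show "AE x in M. ennreal (fn n x) \<le> ennreal (fn (Suc n) x)" for n
      using inc by eventually_elim (simp add: incseq_Suc_iff ennreal_leI)
    show "(\<lambda>x. ennreal (fn n x)) \<in> borel_measurable M" for n
      using int[of n] by measurable
  qed
  also have "\<dots> = (SUP n. ennreal (integral\<^sup>L M (fn n)))"
    using nn_integral_eq_integral[OF int nn] by simp
  finally show ?thesis .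
qed

lemma uniquely_mean_ergodic_le_iterate_bound:
  assumes P: "stochastic_op M P" and ume: "uniquely_mean_ergodic M P fstar"
    and g: "L1_plus M g"
    and bound: "AE x in M. \<forall>k. ennreal ((P ^^ k) g x) \<le> ft x"
  shows "AE x in M. ennreal (fstar x * integral\<^sup>L M g) \<le> ft x"
proof -
  define c where "c = integral\<^sup>L M g"
  define u where "u = (\<lambda>(N::nat) x. (1 / real N) * (\<Sum>n<N. (P ^^ n) g x) - fstar x * c)"
  have "integrable M g" using g unfolding L1_plus_def by auto
  moreover have "integrable M fstar"
    using ume unfolding uniquely_mean_ergodic_def density_on_def L1_plus_def by auto
  ultimately have "integrable M (u N)" for N
    unfolding u_def using stochastic_op_funpow_integrable[OF P] by auto
  moreover have "(\<lambda>N. \<integral>x. norm (u N x) \<partial>M) \<longlonglongrightarrow> 0"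
    using ume g unfolding uniquely_mean_ergodic_def u_def c_def real_norm_def by blast
  ultimately obtain r :: "nat \<Rightarrow> nat"
    where r: "strict_mono r" and lim: "AE x in M. (\<lambda>m. u (r m) x) \<longlonglongrightarrow> 0"
    using tendsto_L1_AE_subseq by blast
  show ?thesis using lim bound
  proof eventually_elim
    case (elim x)
    show ?case
    proof (cases "ft x")
      case (real t)
      have iterate_le: "(P ^^ k) g x \<le> t" for k
        using elim(2) real by (simp add: ennreal_le_iff)
      have "(1 / real (r m)) * (\<Sum>n<r m. (P ^^ n) g x) \<le> t" if "m \<ge> 1" for m
      proof -
        have "real (r m) > 0" using seq_suble[OF r, of m] that by simp
        moreover have "(\<Sum>n<r m. (P ^^ n) g x) \<le> real (r m) * t"
          using sum_bounded_above[of "{..<r m}", OF iterate_le] by simp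
        ultimately show ?thesis by (simp add: field_simps)
      qed
      moreover have "(\<lambda>m. u (r m) x + fstar x * c) \<longlonglongrightarrow> 0 + fstar x * c"
        using elim(1) by (intro tendsto_add) auto
      then have "(\<lambda>m. (1 / real (r m)) * (\<Sum>n<r m. (P ^^ n) g x)) \<longlonglongrightarrow> fstar x * c"
        by (simp add: u_def)
      ultimately have "fstar x * c \<le> t" by (intro LIMSEQ_le_const2) auto
      then show ?thesis using real by (simp add: c_def ennreal_leI)
    qed simp
  qed
qed

lemma AE_witness_in_positive_measure:
  assumes "emeasure M S > 0" "S \<subseteq> space M" "AE x in M. Q x"
  obtains x where "x \<in> S" "Q x"
proof -
  obtain N where N: "{x \<in> space M. \<not> Q x} \<subseteq> N" "emeasure M N = 0" "N \<in> sets M"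
    using assms(3) by (rule AE_E)
  have "\<not> S \<subseteq> N"
    using emeasure_mono[of S N M] N(2,3) assms(1) by auto
  then show ?thesis using that assms(2) N(1) by blast
qed

theorem proposition2p1:
  fixes M :: "'a measure" and P :: "('a \<Rightarrow> real) \<Rightarrow> ('a \<Rightarrow> real)"
    and fstar :: "'a \<Rightarrow> real" and ft :: "'a \<Rightarrow> ennreal"
  assumes "sigma_finite_measure M"
    and "stochastic_op M P"
    and "uniquely_mean_ergodic M P fstar"
    and "ft \<in> borel_measurable M"
    and "subinvariant M P ft"
    and "emeasure M {x \<in> space M. fstar x \<noteq> 0 \<and> ft x < \<infinity>} > 0"
  shows "(\<integral>\<^sup>+ x. ft x \<partial>M) < \<infinity>"
proof -
  obtain fn where fn: "approximating_seq M ft fn"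
    using sigma_finite_approximating_seq[OF assms(1,4)] .
  have "AE x in M. \<forall>k n. ennreal ((P ^^ k) (fn n) x) \<le> ft x"
    using subinvariant_funpow_le[OF assms(2,5) fn] by (simp add: AE_all_countable)
  then have "AE x in M. \<forall>n. ennreal (fstar x * integral\<^sup>L M (fn n)) \<le> ft x"
    using uniquely_mean_ergodic_le_iterate_bound[OF assms(2,3)] fn
    unfolding AE_all_countable approximating_seq_def by (blast elim: eventually_mono)
  moreover have "AE x in M. 0 \<le> fstar x"
    using assms(3) unfolding uniquely_mean_ergodic_def density_on_def L1_plus_def by auto
  ultimately have "AE x in M. 0 \<le> fstar x \<and> (\<forall>n. ennreal (fstar x * integral\<^sup>L M (fn n)) \<le> ft x)"
    by auto
  then obtain x where x: "fstar x \<noteq> 0" "0 \<le> fstar x" "ft x < \<infinity>"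
    and bound: "\<And>n. ennreal (fstar x * integral\<^sup>L M (fn n)) \<le> ft x"
    by (rule AE_witness_in_positive_measure[OF assms(6) Collect_subset]) auto
  obtain t where t: "ft x = ennreal t" "0 \<le> t" using x(3) by (cases "ft x") auto
  have "integral\<^sup>L M (fn n) \<le> t / fstar x" for n
    using bound[of n] x(1,2) t by (simp add: ennreal_le_iff pos_le_divide_eq mult.commute)
  then have "(\<integral>\<^sup>+ x. ft x \<partial>M) \<le> ennreal (t / fstar x)"
    unfolding nn_integral_approximating_seq[OF fn] by (intro SUP_least ennreal_leI)
  then show ?thesis by (simp add: le_less_trans)
qed

end
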